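(* Consider the Count-Min Sketch with Conservative Updates (CMS-CU) with $d$ rows and $w$ counters per row, fed with an IRM request stream, as described in the context. For every pair of distinct items $i,j\in I$ there exist constants $\alpha_{i,j}>0$ and $\beta_{i,j}\ge 0$ (not depending on $s$) such that for every row $r\in[d]$ and every time $s\ge 1$, $$\mathbb{E}\big[\delta_{i,j}^r(s)\big]\le \frac{p_j}{w}\Big(\gamma_{i,j}+\beta_{i,j}\,e^{-\alpha_{i,j}(s-1)}\Big),$$ where $$\gamma_{i,j}=\begin{cases}1,& j\le i,\\ \min\big(\mathcal{A}(p_i-p_j)^{d-1},\,1\big),& j>i,\end{cases}$$ with $\mathcal{A}(x)=\min_{k=0,\dots,w-1}\left(\frac{\sum_{l>k}p_l}{(w-k)x}+\frac{k}{w}\right)$ for $x>0$ and $\mathcal{A}(0)=1$.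
   Context: Items form the universe $I=\{1,\dots,N\}$. Requests follow the Independent Reference Model (IRM): the stream is $Z(1),Z(2),\dots$ with $Z(s)$ i.i.d. categorical random variables, $\Pr(Z(s)=i)=p_i$, $\sum_{i\in I}p_i=1$, and items are numbered so that $p_1\ge p_2\ge\dots\ge p_N$. The sketch is a $d\times w$ array of counters, initially $0$. Hash functions $h_1,\dots,h_d:I\to\{1,\dots,w\}$ are chosen independently and uniformly at random from a family of pairwise independent hash functions (so $\Pr(h_r(i)=h_r(j))=1/w$ for $i\ne j$), independently of the request stream, and are fixed during processing. $c_i^r(t)$ denotes the value at time $t$ of the counter in row $r$, column $h_r(i)$. CMS-CU update: when item $i$ is requested at time $t$, $c_i^r(t)=\max\big(c_i^r(t-1),\ \min_{f\in[d]}c_i^f(t-1)+1\big)$ for all $r\in[d]$ (other counters unchanged). $n_i(t)$ is the number of occurrences of item $i$ among $Z(1),\dots,Z(t)$; the estimate is $\hat n_i(t)=\min_{r\in[d]}c_i^r(t)$. For $j\ne i$, $\delta_{i,j}^r(s)=\mathbb{1}\big(Z(s)=j,\ h_r(i)=h_r(j),\ \hat n_j(s-1)=c_i^r(s-1)\big)$ is the contribution of item $j$'s request at time $s$ to counter $h_r(i)$. Expectations are taken over both the random choice of hash functions and the request process. *)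

theory Defs
  imports "HOL-Analysis.Analysis"
begin

text \<open>Items are 1..N, rows are 1..d, columns are 1..w.
  A tuple of hash functions is hs :: row => item => column.
  A counter array is c :: row => column => nat.\<close>

definition cms_est :: "nat \<Rightarrow> (nat \<Rightarrow> nat \<Rightarrow> nat) \<Rightarrow> (nat \<Rightarrow> nat \<Rightarrow> nat) \<Rightarrow> nat \<Rightarrow> nat" where
  "cms_est d hs c i = Min ((\<lambda>f. c f (hs f i)) ` {1..d})"

definition cms_cu_update :: "nat \<Rightarrow> (nat \<Rightarrow> nat \<Rightarrow> nat) \<Rightarrow> (nat \<Rightarrow> nat \<Rightarrow> nat) \<Rightarrow> nat \<Rightarrow> (nat \<Rightarrow> nat \<Rightarrow> nat)" where
  "cms_cu_update d hs c i =
     (\<lambda>r col. if r \<in> {1..d} \<and> col = hs r i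
               then max (c r col) (cms_est d hs c i + 1) else c r col)"

text \<open>Counter array after processing the request list zs (zs ! (k-1) = Z(k)), starting from 0.\<close>
definition cms_state :: "nat \<Rightarrow> (nat \<Rightarrow> nat \<Rightarrow> nat) \<Rightarrow> nat list \<Rightarrow> (nat \<Rightarrow> nat \<Rightarrow> nat)" where
  "cms_state d hs zs = foldl (cms_cu_update d hs) (\<lambda>_ _. 0) zs"

definition cms_delta :: "nat \<Rightarrow> (nat \<Rightarrow> nat \<Rightarrow> nat) \<Rightarrow> nat \<Rightarrow> nat \<Rightarrow> nat \<Rightarrow> nat list \<Rightarrow> bool" where
  "cms_delta d hs i j r zs =
     (let s = length zs; c = cms_state d hs (take (s - 1) zs) in
      zs ! (s - 1) = j \<and> hs r i = hs r j \<and> cms_est d hs c j = c r (hs r i))"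

text \<open>Pairwise independent family of hash functions from {1..N} to {1..w}
  (a hash function is drawn uniformly from the finite set H).\<close>
definition pairwise_indep_family :: "nat \<Rightarrow> nat \<Rightarrow> (nat \<Rightarrow> nat) set \<Rightarrow> bool" where
  "pairwise_indep_family N w H \<longleftrightarrow>
     finite H \<and> H \<noteq> {} \<and> (\<forall>h\<in>H. \<forall>i\<in>{1..N}. h i \<in> {1..w}) \<and>
     (\<forall>i\<in>{1..N}. \<forall>j\<in>{1..N}. i \<noteq> j \<longrightarrow> (\<forall>a\<in>{1..w}. \<forall>b\<in>{1..w}.
        real (card {h\<in>H. h i = a \<and> h j = b}) = real (card H) / (real w)^2))"

text \<open>E[delta^r_{i,j}(s)]: expectation over d independent uniform draws from H
  and over the IRM request sequence Z(1..s).\<close>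
definition exp_delta :: "nat \<Rightarrow> (nat \<Rightarrow> real) \<Rightarrow> nat \<Rightarrow> (nat \<Rightarrow> nat) set \<Rightarrow> nat \<Rightarrow> nat \<Rightarrow> nat \<Rightarrow> nat \<Rightarrow> real" where
  "exp_delta N p d H i j r s =
     (\<Sum>hs\<in>PiE {1..d} (\<lambda>_. H). (1 / real (card H)) ^ d *
        (\<Sum>zs\<in>{zs. set zs \<subseteq> {1..N} \<and> length zs = s}.
           (\<Prod>k<s. p (zs ! k)) * (if cms_delta d hs i j r zs then 1 else 0)))"

definition cmsA :: "nat \<Rightarrow> (nat \<Rightarrow> real) \<Rightarrow> nat \<Rightarrow> real \<Rightarrow> real" where
  "cmsA N p w x = (if x = 0 then 1 else
     Min ((\<lambda>k. (\<Sum>l\<in>{k+1..N}. p l) / (real (w - k) * x) + real k / real w) ` {0..w-1}))"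

definition cms_gamma :: "nat \<Rightarrow> (nat \<Rightarrow> real) \<Rightarrow> nat \<Rightarrow> nat \<Rightarrow> nat \<Rightarrow> nat \<Rightarrow> real" where
  "cms_gamma N p d w i j = (if j \<le> i then 1 else min ((cmsA N p w (p i - p j)) ^ (d - 1)) 1)"

end

theory Submission
  imports Defs
begin

text \<open>If the request of \<open>j\<close> at time \<open>s\<close> raises the counter of \<open>i\<close> in row \<open>r\<close>, that counter equals
  the estimate of \<open>j\<close>. Conservative updates never underestimate and never push a counter above
  the number of requests hashed to it, so in every other row the counter of \<open>j\<close> must have
  received at least \<open>n\<^sub>i(s - 1)\<close> colliding requests. Rows are hashed independently, hence
  \<open>E[\<delta>] \<le> (p\<^sub>j / w) E[g ^ (d - 1)]\<close>, where \<open>g\<close> is the probability of that event for one random hash function.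
  A hash function either gives \<open>j\<close> colliding items of total popularity at least \<open>p\<^sub>i - p\<^sub>j\<close>, which by
  a union bound over the \<open>k\<close> most popular items and Markov's inequality on the others has
  probability at most \<open>A(p\<^sub>i - p\<^sub>j)\<close>; or the items hashed with \<open>j\<close> are jointly less popular than \<open>i\<close>,
  and a Chernoff bound makes the event exponentially unlikely in \<open>s\<close>. Finally
  \<open>g \<le> q + b\<close> gives \<open>g ^ (d - 1) \<le> q ^ (d - 1) + (d - 1) b\<close>.\<close>

lemma power_diff_le_mult_diff:
  fixes g q :: real
  assumes "0 \<le> q" "q \<le> g" "g \<le> 1"
  shows "g ^ n - q ^ n \<le> real n * (g - q)"
proof (induction n)
  case 0
  show ?case by simp
next
  case (Suc n)
  have "g ^ Suc n - q ^ Suc n = g * (g ^ n - q ^ n) + q ^ n * (g - q)"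
    by (simp add: algebra_simps)
  also have "\<dots> \<le> 1 * (real n * (g - q)) + 1 * (g - q)"
    using assms Suc by (intro add_mono mult_mono) (auto simp: power_mono power_le_one)
  finally show ?case
    by (simp add: algebra_simps)
qed

lemma power_le_power_add_mult:
  fixes g q b :: real
  assumes "0 \<le> g" "g \<le> 1" "0 \<le> q" "0 \<le> b" "g \<le> q + b"
  shows "g ^ n \<le> q ^ n + real n * b"
proof (cases "g \<le> q")
  case True
  then show ?thesis
    using assms power_mono[OF True, of n] by (simp add: add_increasing2)
next
  case False
  then have "g ^ n - q ^ n \<le> real n * (g - q)"
    using assms by (intro power_diff_le_mult_diff) auto
  also have "\<dots> \<le> real n * b"
    using assms by (intro mult_left_mono) auto
  finally show ?thesis by simp
qed

lemma finite_uniform_geometric_bound: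
  fixes f :: "'x \<Rightarrow> nat \<Rightarrow> real"
  assumes "finite X" and geometric: "\<And>x. x \<in> X \<Longrightarrow> \<exists>m>0. m < 1 \<and> (\<forall>t. f x t \<le> m ^ t)"
  shows "\<exists>M>0. M < 1 \<and> (\<forall>x\<in>X. \<forall>t. f x t \<le> M ^ t)"
proof -
  obtain m where m: "\<And>x. x \<in> X \<Longrightarrow> 0 < m x \<and> m x < 1 \<and> (\<forall>t. f x t \<le> m x ^ t)"
    using bchoice[of X "\<lambda>x m. 0 < m \<and> m < 1 \<and> (\<forall>t. f x t \<le> m ^ t)"] geometric by blast
  define M where "M = Max (insert (1/2) (m ` X))"
  have "0 < M" "M < 1"
    using assms(1) m by (auto simp: M_def Max_gr_iff Max_less_iff)
  moreover have "f x t \<le> M ^ t" if "x \<in> X" for x t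
  proof -
    have "m x \<le> M"
      using assms(1) that by (auto simp: M_def)
    then have "m x ^ t \<le> M ^ t"
      using m[OF that] by (intro power_mono) auto
    then show ?thesis
      using m[OF that] by (blast intro: order_trans)
  qed
  ultimately show ?thesis by blast
qed

section \<open>Expectations under the independent reference model\<close>

definition irm_expectation :: "'a set \<Rightarrow> ('a \<Rightarrow> real) \<Rightarrow> nat \<Rightarrow> ('a list \<Rightarrow> real) \<Rightarrow> real" where
  "irm_expectation A p t F = (\<Sum>zs\<in>{zs. set zs \<subseteq> A \<and> length zs = t}. prod_list (map p zs) * F zs)"

lemma lists_length_Suc_eq_snoc:
  "{zs. set zs \<subseteq> A \<and> length zs = Suc t} =
     (\<lambda>(zs, a). zs @ [a]) ` ({zs. set zs \<subseteq> A \<and> length zs = t} \<times> A)"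
  by (auto simp: length_Suc_conv_rev image_iff)

lemma irm_expectation_Suc:
  assumes "finite A"
  shows "irm_expectation A p (Suc t) F = irm_expectation A p t (\<lambda>zs. \<Sum>a\<in>A. p a * F (zs @ [a]))"
proof -
  have "inj_on (\<lambda>(zs, a). zs @ [a]) ({zs. set zs \<subseteq> A \<and> length zs = t} \<times> A)"
    by (auto simp: inj_on_def)
  then show ?thesis
    unfolding irm_expectation_def lists_length_Suc_eq_snoc
    by (simp add: sum.reindex sum.cartesian_product sum_distrib_left mult_ac split_def)
qed

lemma irm_expectation_add:
  "irm_expectation A p t (\<lambda>zs. F zs + G zs) = irm_expectation A p t F + irm_expectation A p t G"
  by (simp add: irm_expectation_def distrib_left sum.distrib)

lemma irm_expectation_cmult:
  "irm_expectation A p t (\<lambda>zs. c * F zs) = c * irm_expectation A p t F"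
  by (simp add: irm_expectation_def sum_distrib_left mult_ac)

lemma irm_expectation_sum:
  "irm_expectation A p t (\<lambda>zs. \<Sum>x\<in>X. F x zs) = (\<Sum>x\<in>X. irm_expectation A p t (F x))"
  unfolding irm_expectation_def by (simp add: sum_distrib_left sum.swap[of _ X])

lemma irm_expectation_mono:
  assumes "\<And>a. a \<in> A \<Longrightarrow> p a \<ge> 0"
    and "\<And>zs. set zs \<subseteq> A \<Longrightarrow> length zs = t \<Longrightarrow> F zs \<le> G zs"
  shows "irm_expectation A p t F \<le> irm_expectation A p t G"
  unfolding irm_expectation_def
  using assms by (intro sum_mono mult_left_mono prod_list_nonneg) auto

lemma irm_expectation_prod_list:
  assumes "finite A"
  shows "irm_expectation A p t (\<lambda>zs. prod_list (map g zs)) = (\<Sum>a\<in>A. p a * g a) ^ t"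
proof (induction t)
  case 0
  have "{zs. set zs \<subseteq> A \<and> length zs = 0} = {[]}" by auto
  then show ?case by (simp add: irm_expectation_def)
next
  case (Suc t)
  have "irm_expectation A p (Suc t) (\<lambda>zs. prod_list (map g zs))
      = irm_expectation A p t (\<lambda>zs. (\<Sum>a\<in>A. p a * g a) * prod_list (map g zs))"
    unfolding irm_expectation_Suc[OF assms] by (simp add: sum_distrib_left mult_ac)
  then show ?case by (simp add: irm_expectation_cmult Suc)
qed

lemma irm_expectation_const:
  assumes "finite A" "sum p A = 1"
  shows "irm_expectation A p t (\<lambda>_. c) = c"
proof -
  have "prod_list (map (\<lambda>_. 1) zs) = (1::real)" for zs :: "'a list"
    by (induction zs) auto
  then show ?thesis
    using irm_expectation_prod_list[OF assms(1), of p t "\<lambda>_. 1"] irm_expectation_cmult[of A p t c "\<lambda>_. 1"]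
    by (simp add: assms(2))
qed

lemma prod_list_tilt:
  fixes y :: real
  assumes "\<not> P i" "y \<noteq> 0"
  shows "prod_list (map (\<lambda>a. if a = i then 1 / y else if P a then y else 1) zs)
    = y ^ length (filter P zs) / y ^ count_list zs i"
  using assms by (induction zs) (auto simp: field_simps)

lemma irm_count_le_filter_exp_bound:
  fixes p :: "'a \<Rightarrow> real"
  assumes A: "finite A" and p_nonneg: "\<And>a. a \<in> A \<Longrightarrow> p a \<ge> 0" and p_sum: "sum p A = 1"
    and i: "i \<in> A" "\<not> P i" and less: "sum p {a\<in>A. P a} < p i"
  shows "\<exists>m>0. m < 1 \<and>
    (\<forall>t. irm_expectation A p t (\<lambda>zs. of_bool (count_list zs i \<le> length (filter P zs))) \<le> m ^ t)"
proof -
  define pP where "pP = sum p {a\<in>A. P a}"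
  have pP: "0 \<le> pP" "pP < p i"
    using less p_nonneg by (auto simp: pP_def intro: sum_nonneg)
  have pi_le_1: "p i \<le> 1"
    using member_le_sum[of i A p] i A p_nonneg p_sum by auto
  define y where "y = 2 * p i / (p i + pP)"
  have y: "1 < y" "pP < p i / y"
    using pP by (auto simp: y_def field_simps)
  \<comment> \<open>Chernoff: \<open>\<Prod>\<phi>\<close> over the stream dominates the indicator, and its mean \<open>m\<close> is below \<open>1\<close>\<close>
  define \<phi> where "\<phi> a = (if a = i then 1 / y else if P a then y else 1)" for a
  define m where "m = (\<Sum>a\<in>A. p a * \<phi> a)"
  have "m = (\<Sum>a\<in>A. p a + (if a = i then p i * (1 / y - 1) else 0) + (if P a then p a * (y - 1) else 0))"
    unfolding m_def \<phi>_def using i(2) by (intro sum.cong refl) (auto simp: algebra_simps)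
  also have "\<dots> = 1 + p i * (1 / y - 1) + pP * (y - 1)"
    using A i p_sum by (simp add: sum.distrib pP_def sum.inter_filter[symmetric] sum_distrib_right)
  finally have m_eq: "m = 1 + p i * (1 / y - 1) + pP * (y - 1)" .
  have "m - 1 = (y - 1) * (pP - p i / y)"
    using m_eq y by (simp add: field_simps)
  then have "m < 1"
    using y mult_pos_neg[of "y - 1" "pP - p i / y"] by simp
  moreover have "0 < m"
  proof -
    have "m = (1 - p i) + p i / y + pP * (y - 1)"
      using m_eq y by (simp add: field_simps)
    moreover have "0 < p i / y" using pP y by simp
    ultimately show ?thesis using pi_le_1 pP y by (smt (verit) mult_nonneg_nonneg)
  qed
  moreover have "irm_expectation A p t (\<lambda>zs. of_bool (count_list zs i \<le> length (filter P zs))) \<le> m ^ t"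
    for t
  proof -
    have tilt: "prod_list (map \<phi> zs) = y ^ length (filter P zs) / y ^ count_list zs i" for zs
      using prod_list_tilt[of P i y zs] i(2) y unfolding \<phi>_def[abs_def] by simp
    have "of_bool (count_list zs i \<le> length (filter P zs)) \<le> prod_list (map \<phi> zs)" for zs
      using y power_increasing[of "count_list zs i" "length (filter P zs)" y] by (auto simp: tilt)
    then have "irm_expectation A p t (\<lambda>zs. of_bool (count_list zs i \<le> length (filter P zs)))
        \<le> irm_expectation A p t (\<lambda>zs. prod_list (map \<phi> zs))"
      by (intro irm_expectation_mono p_nonneg)
    also have "\<dots> = m ^ t"
      unfolding m_def by (rule irm_expectation_prod_list[OF A])
    finally show ?thesis .
  qed
  ultimately show ?thesis by blast
qed

section \<open>Uniformly drawn hash functions\<close>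

definition hash_prob :: "'h set \<Rightarrow> ('h \<Rightarrow> bool) \<Rightarrow> real" where
  "hash_prob H E = real (card {h\<in>H. E h}) / real (card H)"

lemma hash_prob_conv_sum:
  assumes "finite H"
  shows "hash_prob H E = (\<Sum>h\<in>H. of_bool (E h)) / real (card H)"
proof -
  have "{h\<in>H. E h} = H \<inter> {h. E h}" by auto
  then show ?thesis using assms by (simp add: hash_prob_def)
qed

lemma hash_prob_nonneg: "0 \<le> hash_prob H E"
  by (simp add: hash_prob_def)

lemma hash_prob_le_one:
  assumes "finite H"
  shows "hash_prob H E \<le> 1"
proof -
  have "card {h\<in>H. E h} \<le> card H"
    using assms by (intro card_mono) auto
  then show ?thesis
    unfolding hash_prob_def by (cases "card H = 0") auto
qed

lemma hash_prob_mono: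
  assumes "finite H" "\<And>h. h \<in> H \<Longrightarrow> E h \<Longrightarrow> F h"
  shows "hash_prob H E \<le> hash_prob H F"
proof -
  have "card {h\<in>H. E h} \<le> card {h\<in>H. F h}"
    using assms by (intro card_mono) auto
  then show ?thesis
    unfolding hash_prob_def by (simp add: divide_right_mono)
qed

lemma hash_prob_disj_le:
  assumes "finite H"
  shows "hash_prob H (\<lambda>h. E h \<or> F h) \<le> hash_prob H E + hash_prob H F"
proof -
  have "{h\<in>H. E h \<or> F h} = {h\<in>H. E h} \<union> {h\<in>H. F h}" by auto
  then have "card {h\<in>H. E h \<or> F h} \<le> card {h\<in>H. E h} + card {h\<in>H. F h}"
    by (simp add: card_Un_le)
  then show ?thesis
    unfolding hash_prob_def add_divide_distrib[symmetric]
    by (intro divide_right_mono) linarith+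
qed

lemma hash_prob_le_add_bad:
  assumes "finite H"
  shows "hash_prob H E \<le> hash_prob H good + hash_prob H (\<lambda>h. \<not> good h \<and> E h)"
proof -
  have "hash_prob H E \<le> hash_prob H (\<lambda>h. good h \<or> \<not> good h \<and> E h)"
    using assms by (intro hash_prob_mono) auto
  also have "\<dots> \<le> hash_prob H good + hash_prob H (\<lambda>h. \<not> good h \<and> E h)"
    using assms by (rule hash_prob_disj_le)
  finally show ?thesis .
qed

lemma hash_prob_Bex_le:
  assumes "finite H" "finite K"
  shows "hash_prob H (\<lambda>h. \<exists>l\<in>K. E l h) \<le> (\<Sum>l\<in>K. hash_prob H (E l))"
proof -
  have "{h\<in>H. \<exists>l\<in>K. E l h} = (\<Union>l\<in>K. {h\<in>H. E l h})" by auto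
  then have "card {h\<in>H. \<exists>l\<in>K. E l h} \<le> (\<Sum>l\<in>K. card {h\<in>H. E l h})"
    using card_UN_le[OF assms(2)] by simp
  then have "real (card {h\<in>H. \<exists>l\<in>K. E l h}) \<le> (\<Sum>l\<in>K. real (card {h\<in>H. E l h}))"
    unfolding of_nat_sum[symmetric] of_nat_le_iff .
  then show ?thesis
    unfolding hash_prob_def sum_divide_distrib[symmetric] by (rule divide_right_mono) simp
qed

lemma hash_prob_markov:
  fixes X :: "'h \<Rightarrow> real"
  assumes "finite H" "0 < x" "\<And>h. h \<in> H \<Longrightarrow> 0 \<le> X h"
  shows "hash_prob H (\<lambda>h. x \<le> X h) \<le> (\<Sum>h\<in>H. X h) / real (card H) / x"
proof -
  have "x * (\<Sum>h\<in>H. of_bool (x \<le> X h)) \<le> (\<Sum>h\<in>H. X h)"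
    unfolding sum_distrib_left using assms by (intro sum_mono) auto
  then have "(\<Sum>h\<in>H. of_bool (x \<le> X h)) \<le> (\<Sum>h\<in>H. X h) / x"
    using assms(2) by (simp add: field_simps)
  then have "(\<Sum>h\<in>H. of_bool (x \<le> X h)) / real (card H) \<le> (\<Sum>h\<in>H. X h) / x / real (card H)"
    by (rule divide_right_mono) simp
  then show ?thesis
    unfolding hash_prob_conv_sum[OF assms(1)] by (simp add: divide_divide_eq_left mult.commute)
qed

lemma pairwise_indep_collision_prob:
  assumes H: "pairwise_indep_family N w H" and "w \<ge> 1"
    and "l \<in> {1..N}" "j \<in> {1..N}" "l \<noteq> j"
  shows "hash_prob H (\<lambda>h. h l = h j) = 1 / real w"
proof -
  have fin: "finite H" and "H \<noteq> {}" and rng: "\<And>h. h \<in> H \<Longrightarrow> h j \<in> {1..w}"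
    and uniform: "\<And>a. a \<in> {1..w} \<Longrightarrow> real (card {h\<in>H. h l = a \<and> h j = a}) = real (card H) / (real w)\<^sup>2"
    using H assms(3-5) unfolding pairwise_indep_family_def by auto
  have collide: "{h\<in>H. h l = h j} = (\<Union>a\<in>{1..w}. {h\<in>H. h l = a \<and> h j = a})"
    using rng by auto
  have "card {h\<in>H. h l = h j} = (\<Sum>a\<in>{1..w}. card {h\<in>H. h l = a \<and> h j = a})"
    unfolding collide using fin by (intro card_UN_disjoint) auto
  then have "real (card {h\<in>H. h l = h j}) = (\<Sum>a\<in>{1..w}. real (card H) / (real w)\<^sup>2)"
    using uniform by simp
  also have "\<dots> = real (card H) / real w"
    using \<open>w \<ge> 1\<close> by (simp add: power2_eq_square)
  finally have "real (card {h\<in>H. h l = h j}) = real (card H) / real w" .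
  moreover have "real (card H) \<noteq> 0"
    using fin \<open>H \<noteq> {}\<close> by simp
  ultimately show ?thesis
    unfolding hash_prob_def by simp
qed

lemma irm_expectation_hash_prob:
  assumes "finite H"
  shows "irm_expectation A p t (\<lambda>zs. hash_prob H (E zs))
    = (\<Sum>h\<in>H. irm_expectation A p t (\<lambda>zs. of_bool (E zs h))) / real (card H)"
  unfolding hash_prob_conv_sum[OF assms] divide_inverse
  by (simp add: irm_expectation_sum irm_expectation_cmult mult.commute)

lemma irm_expectation_hash_prob_pow_le:
  fixes p :: "'a \<Rightarrow> real" and H :: "'h set"
  assumes A: "finite A" and p_nonneg: "\<And>a. a \<in> A \<Longrightarrow> 0 \<le> p a" and p_sum: "sum p A = 1"
    and H: "finite H"
    and bad: "\<And>h. h \<in> H \<Longrightarrow> \<not> good h \<Longrightarrow>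
      \<exists>m>0. m < 1 \<and> (\<forall>t. irm_expectation A p t (\<lambda>zs. of_bool (E zs h)) \<le> m ^ t)"
  shows "\<exists>M>0. M < 1 \<and> (\<forall>t. irm_expectation A p t (\<lambda>zs. hash_prob H (E zs) ^ n)
    \<le> hash_prob H good ^ n + real n * M ^ t)"
proof -
  have "\<exists>M>0. M < 1 \<and> (\<forall>h\<in>H. \<forall>t. irm_expectation A p t (\<lambda>zs. of_bool (\<not> good h \<and> E zs h)) \<le> M ^ t)"
  proof (rule finite_uniform_geometric_bound[OF H])
    fix h assume "h \<in> H"
    show "\<exists>m>0. m < 1 \<and> (\<forall>t. irm_expectation A p t (\<lambda>zs. of_bool (\<not> good h \<and> E zs h)) \<le> m ^ t)"
    proof (cases "good h")
      case True
      then show ?thesis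
        by (intro exI[of _ "1/2"]) (simp add: irm_expectation_def)
    next
      case False
      then show ?thesis using bad[OF \<open>h \<in> H\<close>] by simp
    qed
  qed
  then obtain M where M: "0 < M" "M < 1"
    and bad_decay: "\<And>h t. h \<in> H \<Longrightarrow> irm_expectation A p t (\<lambda>zs. of_bool (\<not> good h \<and> E zs h)) \<le> M ^ t"
    by blast
  define b where "b zs = hash_prob H (\<lambda>h. \<not> good h \<and> E zs h)" for zs
  have "irm_expectation A p t (\<lambda>zs. hash_prob H (E zs) ^ n) \<le> hash_prob H good ^ n + real n * M ^ t"
    for t
  proof -
    have "irm_expectation A p t (\<lambda>zs. hash_prob H (E zs) ^ n)
        \<le> irm_expectation A p t (\<lambda>zs. hash_prob H good ^ n + real n * b zs)"
      unfolding b_def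
      by (intro irm_expectation_mono p_nonneg power_le_power_add_mult hash_prob_le_add_bad[OF H])
        (auto simp: hash_prob_nonneg hash_prob_le_one[OF H])
    also have "\<dots> = hash_prob H good ^ n + real n * irm_expectation A p t b"
      by (simp add: irm_expectation_add irm_expectation_cmult irm_expectation_const[OF A p_sum])
    also have "irm_expectation A p t b \<le> (\<Sum>h\<in>H. M ^ t) / real (card H)"
      unfolding b_def irm_expectation_hash_prob[OF H]
      by (intro divide_right_mono sum_mono bad_decay) auto
    also have "\<dots> \<le> M ^ t"
      using M by simp
    finally show ?thesis
      by (simp add: mult_left_mono)
  qed
  then show ?thesis
    using M by blast
qed

lemma sum_PiE_uniform_prod:
  fixes G :: "'i \<Rightarrow> 'h \<Rightarrow> real"
  assumes "finite D" "finite H"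
  shows "(\<Sum>hs\<in>PiE D (\<lambda>_. H). (1 / real (card H)) ^ card D * (\<Prod>f\<in>D. G f (hs f)))
       = (\<Prod>f\<in>D. (\<Sum>h\<in>H. G f h) / real (card H))"
proof -
  have "(\<Prod>f\<in>D. (\<Sum>h\<in>H. G f h) / real (card H)) = (\<Prod>f\<in>D. \<Sum>h\<in>H. G f h / real (card H))"
    by (simp add: sum_divide_distrib)
  also have "\<dots> = (\<Sum>hs\<in>PiE D (\<lambda>_. H). \<Prod>f\<in>D. G f (hs f) / real (card H))"
    using assms by (rule prod_sum_PiE)
  also have "\<dots> = (\<Sum>hs\<in>PiE D (\<lambda>_. H). (1 / real (card H)) ^ card D * (\<Prod>f\<in>D. G f (hs f)))"
    by (simp add: prod.distrib prod_dividef field_simps)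
  finally show ?thesis ..
qed

section \<open>Heavy collisions and the function A\<close>

definition collision_mass :: "nat \<Rightarrow> (nat \<Rightarrow> real) \<Rightarrow> nat \<Rightarrow> (nat \<Rightarrow> nat) \<Rightarrow> real" where
  "collision_mass N p j h = (\<Sum>l\<in>{l\<in>{1..N}. l \<noteq> j \<and> h l = h j}. p l)"

lemma collision_mass_split:
  assumes "K \<inter> L = {}" "K \<union> L = {l\<in>{1..N}. l \<noteq> j}"
  shows "collision_mass N p j h
    = (\<Sum>l\<in>K. p l * of_bool (h l = h j)) + (\<Sum>l\<in>L. p l * of_bool (h l = h j))"
proof -
  have "finite (K \<union> L)"
    using assms(2) by simp
  then have "(\<Sum>l\<in>K. p l * of_bool (h l = h j)) + (\<Sum>l\<in>L. p l * of_bool (h l = h j))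
      = (\<Sum>l\<in>K \<union> L. p l * of_bool (h l = h j))"
    using assms(1) by (intro sum.union_disjoint[symmetric]) auto
  also have "\<dots> = (\<Sum>l\<in>{l\<in>{1..N}. l \<noteq> j}. p l * of_bool (h l = h j))"
    unfolding assms(2) ..
  also have "\<dots> = (\<Sum>l\<in>{l\<in>{1..N}. l \<noteq> j} \<inter> {l. h l = h j}. p l)"
    by simp
  also have "{l\<in>{1..N}. l \<noteq> j} \<inter> {l. h l = h j} = {l\<in>{1..N}. l \<noteq> j \<and> h l = h j}"
    by auto
  finally show ?thesis
    unfolding collision_mass_def by simp
qed

lemma collision_union_bound:
  assumes H: "pairwise_indep_family N w H" and w: "w \<ge> 1" and j: "j \<in> {1..N}"
    and K: "K \<subseteq> {1..N} - {j}"
  shows "hash_prob H (\<lambda>h. \<exists>l\<in>K. h l = h j) \<le> real (card K) / real w"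
proof -
  have fin: "finite H"
    using H by (simp add: pairwise_indep_family_def)
  have "finite K"
    using K finite_subset by blast
  then have "hash_prob H (\<lambda>h. \<exists>l\<in>K. h l = h j) \<le> (\<Sum>l\<in>K. hash_prob H (\<lambda>h. h l = h j))"
    by (rule hash_prob_Bex_le[OF fin])
  also have "\<dots> = (\<Sum>l\<in>K. 1 / real w)"
    using K by (intro sum.cong refl pairwise_indep_collision_prob[OF H w _ j]) auto
  finally show ?thesis by simp
qed

lemma collision_markov_bound:
  fixes p :: "nat \<Rightarrow> real"
  assumes H: "pairwise_indep_family N w H" and w: "w \<ge> 1" and j: "j \<in> {1..N}"
    and L: "L \<subseteq> {1..N} - {j}" and p_nonneg: "\<And>l. l \<in> L \<Longrightarrow> 0 \<le> p l" and x: "0 < x"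
  shows "hash_prob H (\<lambda>h. x \<le> (\<Sum>l\<in>L. p l * of_bool (h l = h j))) \<le> (\<Sum>l\<in>L. p l) / (real w * x)"
proof -
  have fin: "finite H"
    using H by (simp add: pairwise_indep_family_def)
  have "(\<Sum>h\<in>H. \<Sum>l\<in>L. p l * of_bool (h l = h j)) / real (card H)
      = (\<Sum>l\<in>L. p l * hash_prob H (\<lambda>h. h l = h j))"
    unfolding hash_prob_conv_sum[OF fin]
    by (simp add: sum.swap[of _ H] sum_divide_distrib sum_distrib_left)
  also have "\<dots> = (\<Sum>l\<in>L. p l) / real w"
    using L by (simp add: pairwise_indep_collision_prob[OF H w _ j] sum_divide_distrib subset_iff)
  finally have "hash_prob H (\<lambda>h. x \<le> (\<Sum>l\<in>L. p l * of_bool (h l = h j))) \<le> (\<Sum>l\<in>L. p l) / real w / x"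
    using hash_prob_markov[OF fin x, of "\<lambda>h. \<Sum>l\<in>L. p l * of_bool (h l = h j)"] p_nonneg
    by (simp add: sum_nonneg)
  then show ?thesis
    by (simp add: divide_divide_eq_left)
qed

lemma heavy_collision_prob_le:
  fixes p :: "nat \<Rightarrow> real"
  assumes H: "pairwise_indep_family N w H" and w: "w \<ge> 1" and j: "j \<in> {1..N}"
    and p_nonneg: "\<And>l. l \<in> {1..N} \<Longrightarrow> 0 \<le> p l" and x: "0 < x" and k: "k < w"
  shows "hash_prob H (\<lambda>h. x \<le> collision_mass N p j h)
    \<le> (\<Sum>l\<in>{k+1..N}. p l) / (real (w - k) * x) + real k / real w"
proof -
  have fin: "finite H"
    using H by (simp add: pairwise_indep_family_def)
  define K where "K = {l\<in>{1..N}. l \<le> k \<and> l \<noteq> j}"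
  define L where "L = {l\<in>{1..N}. k < l \<and> l \<noteq> j}"
  define T where "T h = (\<Sum>l\<in>L. p l * of_bool (h l = h j))" for h :: "nat \<Rightarrow> nat"
  have mass_split: "collision_mass N p j h = (\<Sum>l\<in>K. p l * of_bool (h l = h j)) + T h" for h
    unfolding T_def by (rule collision_mass_split) (auto simp: K_def L_def)
  \<comment> \<open>a heavy collision either involves one of the \<open>k\<close> most popular items or a heavy tail\<close>
  have "(\<exists>l\<in>K. h l = h j) \<or> x \<le> T h" if "x \<le> collision_mass N p j h" for h
  proof (cases "\<exists>l\<in>K. h l = h j")
    case False
    then have "(\<Sum>l\<in>K. p l * of_bool (h l = h j)) = 0"
      by (intro sum.neutral) auto
    then show ?thesis
      using that mass_split by simp
  qed simp
  then have "hash_prob H (\<lambda>h. x \<le> collision_mass N p j h)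
      \<le> hash_prob H (\<lambda>h. (\<exists>l\<in>K. h l = h j) \<or> x \<le> T h)"
    by (intro hash_prob_mono[OF fin])
  also have "\<dots> \<le> hash_prob H (\<lambda>h. \<exists>l\<in>K. h l = h j) + hash_prob H (\<lambda>h. x \<le> T h)"
    by (rule hash_prob_disj_le[OF fin])
  also have "\<dots> \<le> real (card K) / real w + (\<Sum>l\<in>L. p l) / (real w * x)"
    unfolding T_def using p_nonneg
    by (intro add_mono collision_union_bound[OF H w j] collision_markov_bound[OF H w j] x)
      (auto simp: K_def L_def)
  also have "\<dots> \<le> real k / real w + (\<Sum>l\<in>{k+1..N}. p l) / (real (w - k) * x)"
  proof (rule add_mono)
    have "card K \<le> card {1..k}"
      by (intro card_mono) (auto simp: K_def)
    then show "real (card K) / real w \<le> real k / real w"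
      by (simp add: divide_right_mono)
    have "(\<Sum>l\<in>L. p l) \<le> (\<Sum>l\<in>{k+1..N}. p l)"
      using p_nonneg by (intro sum_mono2) (auto simp: L_def)
    moreover have "real (w - k) * x \<le> real w * x"
      using x by simp
    ultimately show "(\<Sum>l\<in>L. p l) / (real w * x) \<le> (\<Sum>l\<in>{k+1..N}. p l) / (real (w - k) * x)"
      using k x p_nonneg by (intro frac_le sum_nonneg) auto
  qed
  finally show ?thesis by simp
qed

lemma heavy_collision_prob_le_cmsA:
  fixes p :: "nat \<Rightarrow> real"
  assumes H: "pairwise_indep_family N w H" and w: "w \<ge> 1" and j: "j \<in> {1..N}"
    and p_nonneg: "\<And>l. l \<in> {1..N} \<Longrightarrow> 0 \<le> p l" and x: "0 < x"
  shows "hash_prob H (\<lambda>h. x \<le> collision_mass N p j h) \<le> cmsA N p w x"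
proof -
  have "hash_prob H (\<lambda>h. x \<le> collision_mass N p j h)
      \<le> (\<Sum>l\<in>{k+1..N}. p l) / (real (w - k) * x) + real k / real w" if "k \<in> {0..w-1}" for k
    using that w by (intro heavy_collision_prob_le[OF H w j p_nonneg x]) auto
  then show ?thesis
    unfolding cmsA_def using x by (simp add: Min_ge_iff)
qed

lemma heavy_collision_prob_pow_le_cms_gamma:
  fixes p :: "nat \<Rightarrow> real"
  assumes H: "pairwise_indep_family N w H" and w: "w \<ge> 1" and ij: "i \<in> {1..N}" "j \<in> {1..N}"
    and p_nonneg: "\<And>l. l \<in> {1..N} \<Longrightarrow> 0 \<le> p l"
    and p_antimono: "\<And>l m. l \<in> {1..N} \<Longrightarrow> m \<in> {1..N} \<Longrightarrow> l \<le> m \<Longrightarrow> p m \<le> p l"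
  shows "hash_prob H (\<lambda>h. p i - p j \<le> collision_mass N p j h) ^ (d - 1) \<le> cms_gamma N p d w i j"
proof -
  let ?q = "hash_prob H (\<lambda>h. p i - p j \<le> collision_mass N p j h)"
  have fin: "finite H"
    using H by (simp add: pairwise_indep_family_def)
  have q: "0 \<le> ?q" "?q \<le> 1"
    using hash_prob_nonneg hash_prob_le_one[OF fin] .
  then have q_pow: "?q ^ (d - 1) \<le> 1"
    by (simp add: power_le_one)
  show ?thesis
  proof (cases "j \<le> i \<or> p i - p j = 0")
    case True
    then show ?thesis using q_pow by (auto simp: cms_gamma_def cmsA_def)
  next
    case False
    then have "0 < p i - p j"
      using p_antimono[OF ij] by fastforce
    then have "?q \<le> cmsA N p w (p i - p j)"
      using heavy_collision_prob_le_cmsA[OF H w ij(2)] p_nonneg by blast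
    then have "?q ^ (d - 1) \<le> cmsA N p w (p i - p j) ^ (d - 1)"
      using q by (intro power_mono) auto
    then show ?thesis
      using False q_pow by (simp add: cms_gamma_def)
  qed
qed

section \<open>Invariants of conservative updates\<close>

lemma cms_state_snoc: "cms_state d hs (zs @ [z]) = cms_cu_update d hs (cms_state d hs zs) z"
  by (simp add: cms_state_def)

lemma cms_est_le: "f \<in> {1..d} \<Longrightarrow> cms_est d hs c i \<le> c f (hs f i)"
  unfolding cms_est_def by (rule Min_le) auto

lemma cms_est_greatest:
  "d \<ge> 1 \<Longrightarrow> (\<And>f. f \<in> {1..d} \<Longrightarrow> m \<le> c f (hs f i)) \<Longrightarrow> m \<le> cms_est d hs c i"
  unfolding cms_est_def by (subst Min_ge_iff) auto

lemma cms_est_update_mono: "d \<ge> 1 \<Longrightarrow> cms_est d hs c i \<le> cms_est d hs (cms_cu_update d hs c z) i"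
  by (rule cms_est_greatest) (auto simp: cms_cu_update_def intro: order_trans[OF cms_est_le])

lemma cms_est_update_self: "d \<ge> 1 \<Longrightarrow> cms_est d hs c z < cms_est d hs (cms_cu_update d hs c z) z"
  by (subst Suc_le_eq[symmetric], rule cms_est_greatest) (auto simp: cms_cu_update_def)

lemma count_list_le_cms_est:
  assumes "d \<ge> 1"
  shows "count_list zs i \<le> cms_est d hs (cms_state d hs zs) i"
proof (induction zs rule: rev_induct)
  case Nil
  show ?case by simp
next
  case (snoc z zs)
  then show ?case
    using cms_est_update_self[OF assms, of hs "cms_state d hs zs" z]
      cms_est_update_mono[OF assms, of hs "cms_state d hs zs" i z]
    by (auto simp: cms_state_snoc)
qed

lemma cms_state_le_length_filter:
  "cms_state d hs zs f col \<le> length (filter (\<lambda>l. hs f l = col) zs)"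
proof (induction zs rule: rev_induct)
  case Nil
  show ?case by (simp add: cms_state_def)
next
  case (snoc z zs)
  have "f \<in> {1..d} \<Longrightarrow> cms_est d hs (cms_state d hs zs) z \<le> cms_state d hs zs f (hs f z)"
    by (rule cms_est_le)
  with snoc show ?case
    by (auto simp: cms_state_snoc cms_cu_update_def)
qed

text \<open>A necessary condition, in a row with hash function \<open>h\<close>, for a request of \<open>j\<close> after the
  stream \<open>zs\<close> to contribute to the counter of \<open>i\<close> in some row.\<close>
definition row_admits :: "nat \<Rightarrow> nat \<Rightarrow> nat list \<Rightarrow> (nat \<Rightarrow> nat) \<Rightarrow> bool" where
  "row_admits i j zs h \<longleftrightarrow> count_list zs i \<le> length (filter (\<lambda>l. h l = h j) zs)"

lemma cms_est_eq_counter_imp_row_admits: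
  assumes "d \<ge> 1" "r \<in> {1..d}" "f \<in> {1..d}"
    and "cms_est d hs (cms_state d hs zs) j = cms_state d hs zs r (hs r i)"
  shows "row_admits i j zs (hs f)"
proof -
  let ?c = "cms_state d hs zs"
  have "count_list zs i \<le> cms_est d hs ?c i" by (rule count_list_le_cms_est[OF assms(1)])
  also have "\<dots> \<le> ?c r (hs r i)" by (rule cms_est_le[OF assms(2)])
  also have "\<dots> = cms_est d hs ?c j" using assms(4) by simp
  also have "\<dots> \<le> ?c f (hs f j)" by (rule cms_est_le[OF assms(3)])
  also have "\<dots> \<le> length (filter (\<lambda>l. hs f l = hs f j) zs)" by (rule cms_state_le_length_filter)
  finally show ?thesis unfolding row_admits_def .
qed

lemma cms_delta_snoc:
  "cms_delta d hs i j r (zs @ [a]) \<longleftrightarrow>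
     a = j \<and> hs r i = hs r j \<and> cms_est d hs (cms_state d hs zs) j = cms_state d hs zs r (hs r i)"
  by (simp add: cms_delta_def Let_def nth_append)

lemma irm_expectation_delta_le:
  fixes p :: "nat \<Rightarrow> real"
  assumes d: "d \<ge> 1" and r: "r \<in> {1..d}" and j: "j \<in> {1..N}"
    and p_nonneg: "\<And>l. l \<in> {1..N} \<Longrightarrow> 0 \<le> p l"
  shows "irm_expectation {1..N} p (Suc t) (\<lambda>zs. of_bool (cms_delta d hs i j r zs))
    \<le> p j * irm_expectation {1..N} p t (\<lambda>zs. \<Prod>f\<in>{1..d}.
          if f = r then of_bool (hs f i = hs f j) else of_bool (row_admits i j zs (hs f)))"
proof -
  have "(\<Sum>a\<in>{1..N}. p a * of_bool (cms_delta d hs i j r (zs @ [a])))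
      \<le> p j * (\<Prod>f\<in>{1..d}.
          if f = r then of_bool (hs f i = hs f j) else of_bool (row_admits i j zs (hs f)))" for zs
  proof -
    have "(\<Sum>a\<in>{1..N}. p a * of_bool (cms_delta d hs i j r (zs @ [a])))
        = p j * of_bool (cms_delta d hs i j r (zs @ [j]))"
      using j by (simp add: cms_delta_snoc of_bool_conj if_distrib sum.delta cong: if_cong)
    also have "\<dots> \<le> p j * (\<Prod>f\<in>{1..d}.
          if f = r then of_bool (hs f i = hs f j) else of_bool (row_admits i j zs (hs f)))"
    proof (intro mult_left_mono)
      have "(\<Prod>f\<in>{1..d}. if f = r then of_bool (hs f i = hs f j)
          else of_bool (row_admits i j zs (hs f))) = (1::real)" if "cms_delta d hs i j r (zs @ [j])"
        using that cms_est_eq_counter_imp_row_admits[OF d r]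
        by (intro prod.neutral) (auto simp: cms_delta_snoc)
      then show "of_bool (cms_delta d hs i j r (zs @ [j])) \<le> (\<Prod>f\<in>{1..d}.
          if f = r then of_bool (hs f i = hs f j) else of_bool (row_admits i j zs (hs f)) :: real)"
        by (cases "cms_delta d hs i j r (zs @ [j])") (auto intro!: prod_nonneg)
    qed (rule p_nonneg[OF j])
    finally show ?thesis .
  qed
  then show ?thesis
    unfolding irm_expectation_Suc[OF finite_atLeastAtMost] irm_expectation_cmult[symmetric]
    using p_nonneg by (intro irm_expectation_mono)
qed

lemma exp_delta_conv_irm_expectation:
  "exp_delta N p d H i j r s = (\<Sum>hs\<in>PiE {1..d} (\<lambda>_. H).
     (1 / real (card H)) ^ d * irm_expectation {1..N} p s (\<lambda>zs. of_bool (cms_delta d hs i j r zs)))"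
  unfolding exp_delta_def irm_expectation_def
  by (intro sum.cong refl arg_cong2[where f = "(*)"])
    (auto simp: prod.list_conv_set_nth atLeast0LessThan)

lemma exp_delta_le:
  fixes p :: "nat \<Rightarrow> real"
  assumes d: "d \<ge> 1" and w: "w \<ge> 1" and p_nonneg: "\<And>l. l \<in> {1..N} \<Longrightarrow> 0 \<le> p l"
    and H: "pairwise_indep_family N w H"
    and ij: "i \<in> {1..N}" "j \<in> {1..N}" "i \<noteq> j" and r: "r \<in> {1..d}"
  shows "exp_delta N p d H i j r (Suc t)
    \<le> p j / real w * irm_expectation {1..N} p t (\<lambda>zs. hash_prob H (row_admits i j zs) ^ (d - 1))"
proof -
  have fin: "finite H"
    using H by (simp add: pairwise_indep_family_def)
  define G where "G zs f h = (if f = r then of_bool (h i = h j) else of_bool (row_admits i j zs h) :: real)"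
    for zs f and h :: "nat \<Rightarrow> nat"
  \<comment> \<open>the rows are hashed independently, so the expectation over the hash functions factorizes\<close>
  have rows: "(\<Sum>hs\<in>PiE {1..d} (\<lambda>_. H). (1 / real (card H)) ^ d * (\<Prod>f\<in>{1..d}. G zs f (hs f)))
      = 1 / real w * hash_prob H (row_admits i j zs) ^ (d - 1)" for zs
  proof -
    have "(\<Prod>f\<in>{1..d}. (\<Sum>h\<in>H. G zs f h) / real (card H))
        = (\<Sum>h\<in>H. G zs r h) / real (card H) * (\<Prod>f\<in>{1..d} - {r}. (\<Sum>h\<in>H. G zs f h) / real (card H))"
      using r by (simp add: prod.remove)
    also have "\<dots> = 1 / real w * hash_prob H (row_admits i j zs) ^ (d - 1)"
      using r pairwise_indep_collision_prob[OF H w ij]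
      by (simp add: G_def hash_prob_conv_sum[OF fin])
    finally show ?thesis
      using sum_PiE_uniform_prod[OF finite_atLeastAtMost fin, of 1 d "G zs"] by simp
  qed
  have "exp_delta N p d H i j r (Suc t)
      \<le> (\<Sum>hs\<in>PiE {1..d} (\<lambda>_. H). (1 / real (card H)) ^ d *
           (p j * irm_expectation {1..N} p t (\<lambda>zs. \<Prod>f\<in>{1..d}. G zs f (hs f))))"
    unfolding exp_delta_conv_irm_expectation G_def
    by (intro sum_mono mult_left_mono zero_le_power irm_expectation_delta_le[OF d r ij(2) p_nonneg]) simp_all
  also have "\<dots> = p j * irm_expectation {1..N} p t
      (\<lambda>zs. \<Sum>hs\<in>PiE {1..d} (\<lambda>_. H). (1 / real (card H)) ^ d * (\<Prod>f\<in>{1..d}. G zs f (hs f)))"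
    by (simp add: irm_expectation_sum irm_expectation_cmult sum_distrib_left mult_ac)
  also have "\<dots> = p j / real w * irm_expectation {1..N} p t (\<lambda>zs. hash_prob H (row_admits i j zs) ^ (d - 1))"
    unfolding rows irm_expectation_cmult by simp
  finally show ?thesis .
qed

lemma light_collision_row_admits_exp_bound:
  fixes p :: "nat \<Rightarrow> real"
  assumes p_nonneg: "\<And>l. l \<in> {1..N} \<Longrightarrow> 0 \<le> p l" and p_sum: "(\<Sum>l\<in>{1..N}. p l) = 1"
    and ij: "i \<in> {1..N}" "j \<in> {1..N}" "i \<noteq> j" and light: "collision_mass N p j h < p i - p j"
  shows "\<exists>m>0. m < 1 \<and> (\<forall>t. irm_expectation {1..N} p t (\<lambda>zs. of_bool (row_admits i j zs h)) \<le> m ^ t)"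
proof -
  have "h i \<noteq> h j"
  proof
    assume "h i = h j"
    then have "p i \<le> collision_mass N p j h"
      using ij light p_nonneg unfolding collision_mass_def
      by (intro member_le_sum) auto
    then show False
      using light p_nonneg[OF ij(2)] by simp
  qed
  have "{l\<in>{1..N}. h l = h j} = insert j {l\<in>{1..N}. l \<noteq> j \<and> h l = h j}"
    using ij by auto
  then have "sum p {l\<in>{1..N}. h l = h j} = p j + collision_mass N p j h"
    unfolding collision_mass_def by (simp add: sum.insert)
  then have "sum p {l\<in>{1..N}. h l = h j} < p i"
    using light by simp
  with \<open>h i \<noteq> h j\<close> show ?thesis
    unfolding row_admits_def
    by (intro irm_count_le_filter_exp_bound[where P = "\<lambda>l. h l = h j"] p_nonneg p_sum ij) auto
qed

lemma irm_expectation_row_admits_pow_le: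
  fixes p :: "nat \<Rightarrow> real"
  assumes p_nonneg: "\<And>l. l \<in> {1..N} \<Longrightarrow> 0 \<le> p l" and p_sum: "(\<Sum>l\<in>{1..N}. p l) = 1"
    and H: "finite H" and ij: "i \<in> {1..N}" "j \<in> {1..N}" "i \<noteq> j"
  shows "\<exists>M>0. M < 1 \<and> (\<forall>t. irm_expectation {1..N} p t (\<lambda>zs. hash_prob H (row_admits i j zs) ^ n)
    \<le> hash_prob H (\<lambda>h. p i - p j \<le> collision_mass N p j h) ^ n + real n * M ^ t)"
proof (rule irm_expectation_hash_prob_pow_le[OF finite_atLeastAtMost _ p_sum H])
  fix h
  assume "\<not> p i - p j \<le> collision_mass N p j h"
  then show "\<exists>m>0. m < 1 \<and>
      (\<forall>t. irm_expectation {1..N} p t (\<lambda>zs. of_bool (row_admits i j zs h)) \<le> m ^ t)"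
    using light_collision_row_admits_exp_bound[OF _ p_sum ij] p_nonneg by simp
qed (rule p_nonneg)

lemma exp_delta_Suc_le_geometric:
  fixes p :: "nat \<Rightarrow> real"
  assumes d: "d \<ge> 1" and w: "w \<ge> 1"
    and p_nonneg: "\<And>l. l \<in> {1..N} \<Longrightarrow> 0 \<le> p l" and p_sum: "(\<Sum>l\<in>{1..N}. p l) = 1"
    and p_antimono: "\<And>l m. l \<in> {1..N} \<Longrightarrow> m \<in> {1..N} \<Longrightarrow> l \<le> m \<Longrightarrow> p m \<le> p l"
    and H: "pairwise_indep_family N w H" and ij: "i \<in> {1..N}" "j \<in> {1..N}" "i \<noteq> j"
  shows "\<exists>M>0. M < 1 \<and> (\<forall>r\<in>{1..d}. \<forall>t. exp_delta N p d H i j r (Suc t)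
    \<le> p j / real w * (cms_gamma N p d w i j + real (d - 1) * M ^ t))"
proof -
  have fin: "finite H"
    using H by (simp add: pairwise_indep_family_def)
  obtain M where M: "0 < M" "M < 1"
    and tail: "\<And>t. irm_expectation {1..N} p t (\<lambda>zs. hash_prob H (row_admits i j zs) ^ (d - 1))
      \<le> hash_prob H (\<lambda>h. p i - p j \<le> collision_mass N p j h) ^ (d - 1) + real (d - 1) * M ^ t"
    using irm_expectation_row_admits_pow_le[OF p_nonneg p_sum fin ij] by blast
  have gamma: "hash_prob H (\<lambda>h. p i - p j \<le> collision_mass N p j h) ^ (d - 1) \<le> cms_gamma N p d w i j"
    using heavy_collision_prob_pow_le_cms_gamma[OF H w ij(1,2)] p_nonneg p_antimono by blast
  have "exp_delta N p d H i j r (Suc t) \<le> p j / real w * (cms_gamma N p d w i j + real (d - 1) * M ^ t)"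
    if r: "r \<in> {1..d}" for r t
  proof -
    have "exp_delta N p d H i j r (Suc t)
        \<le> p j / real w * irm_expectation {1..N} p t (\<lambda>zs. hash_prob H (row_admits i j zs) ^ (d - 1))"
      by (rule exp_delta_le[OF d w p_nonneg H ij r])
    also have "\<dots> \<le> p j / real w * (cms_gamma N p d w i j + real (d - 1) * M ^ t)"
      using tail[of t] gamma p_nonneg[OF ij(2)] by (intro mult_left_mono) auto
    finally show ?thesis .
  qed
  with M show ?thesis by blast
qed

theorem lemma1:
  fixes N d w :: nat and p :: "nat \<Rightarrow> real" and H :: "(nat \<Rightarrow> nat) set" and i j :: nat
  assumes "N \<ge> 1" "d \<ge> 1" "w \<ge> 1"
    and "\<And>l. l \<in> {1..N} \<Longrightarrow> p l \<ge> 0"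
    and "(\<Sum>l\<in>{1..N}. p l) = 1"
    and "\<And>l m. l \<in> {1..N} \<Longrightarrow> m \<in> {1..N} \<Longrightarrow> l \<le> m \<Longrightarrow> p m \<le> p l"
    and "pairwise_indep_family N w H"
    and "i \<in> {1..N}" "j \<in> {1..N}" "i \<noteq> j"
  shows "\<exists>\<alpha>>0. \<exists>\<beta>\<ge>0. \<forall>r\<in>{1..d}. \<forall>s\<ge>1.
           exp_delta N p d H i j r s
             \<le> p j / real w * (cms_gamma N p d w i j + \<beta> * exp (- \<alpha> * real (s - 1)))"
proof -
  note d = assms(2) and w = assms(3) and p_nonneg = assms(4) and p_sum = assms(5)
    and p_antimono = assms(6) and H = assms(7) and ij = assms(8-10)
  obtain M where M: "0 < M" "M < 1" and bound: "\<And>r t. r \<in> {1..d} \<Longrightarrow> exp_delta N p d H i j r (Suc t)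
      \<le> p j / real w * (cms_gamma N p d w i j + real (d - 1) * M ^ t)"
    using exp_delta_Suc_le_geometric[OF d w p_nonneg p_sum p_antimono H ij] by blast
  define \<alpha> where "\<alpha> = - ln M"
  have geometric: "M ^ t = exp (- \<alpha> * real t)" for t
    using M exp_of_nat_mult[of t "ln M"] by (simp add: \<alpha>_def mult.commute)
  show ?thesis
  proof (rule exI[of _ \<alpha>], intro conjI exI[of _ "real (d - 1)"] ballI allI impI)
    show "0 < \<alpha>"
      using M by (simp add: \<alpha>_def)
    fix r s :: nat
    assume "r \<in> {1..d}" "1 \<le> s"
    then show "exp_delta N p d H i j r s
        \<le> p j / real w * (cms_gamma N p d w i j + real (d - 1) * exp (- \<alpha> * real (s - 1)))"
      using bound[of r "s - 1"] by (simp add: geometric)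
  qed simp
qed

end
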